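(* Let $\sigma(x,y)=(x\rightharpoonup y,x\leftharpoonup y)$ be a right-non-degenerate involutive quiver-theoretic Yang--Baxter map on a quiver $\mathscr{A}$ over $\Lambda$. For $x,y\in\mathscr{A}$ with $\mathfrak{t}(x)=\mathfrak{t}(y)$ set $x\bullet y:=(\cdot\leftharpoonup x)^{-1}(y)$. Then $(\mathscr{A},\bullet)$ is a left-non-degenerate weak co-RC-system, and $x\bullet y$ is defined whenever $\mathfrak{t}(x)=\mathfrak{t}(y)$.
   Context: A quiver over $\Lambda$ has source/target maps $\mathfrak{s},\mathfrak{t}$; $Q(\lambda,\Lambda)$ (resp. $Q(\Lambda,\mu)$) denotes arrows with source $\lambda$ (resp. target $\mu$). A quiver-theoretic Yang--Baxter map is a source/target-preserving map $\sigma$ on composable pairs $\mathscr{A}\otimes\mathscr{A}$ satisfying the braid relation $(\sigma\otimes\mathrm{id})(\mathrm{id}\otimes\sigma)(\sigma\otimes\mathrm{id})=(\mathrm{id}\otimes\sigma)(\sigma\otimes\mathrm{id})(\mathrm{id}\otimes\sigma)$; involutive: $\sigma^2=\mathrm{id}$; right-non-degenerate: each $\cdot\leftharpoonup y\colon\mathscr{A}(\Lambda,\mathfrak{s}(y))\to\mathscr{A}(\Lambda,\mathfrak{t}(y))$ is bijective. A weak co-RC-system $(Q,\bullet)$ is a quiver $Q$ with a partially defined binary operation $\bullet$ such that: $x\bullet y$ is defined only if $\mathfrak{t}(x)=\mathfrak{t}(y)$; whenever $x\bullet y$ is defined, $y\bullet x$ is defined, $\mathfrak{t}(x\bullet y)=\mathfrak{s}(x)$,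 $\mathfrak{t}(y\bullet x)=\mathfrak{s}(y)$, $\mathfrak{s}(x\bullet y)=\mathfrak{s}(y\bullet x)$; and whenever $x\bullet y$, $x\bullet z$, $(x\bullet y)\bullet(x\bullet z)$ are defined, then $y\bullet z$ and $(y\bullet x)\bullet(y\bullet z)$ are defined and $(x\bullet y)\bullet(x\bullet z)=(y\bullet x)\bullet(y\bullet z)$. It is left-non-degenerate if every map $x\bullet\cdot\colon Q(\Lambda,\mathfrak{t}(x))\to Q(\Lambda,\mathfrak{s}(x))$ is a bijection. *)

theory Defs
  imports Main
begin

text \<open>A quiver is given by a carrier set of arrows A and source/target maps s, t
(the vertex set Lambda is the type 'v). Composable pairs x (x) y: t x = s y.\<close>

definition composable :: "'a set \<Rightarrow> ('a \<Rightarrow> 'v) \<Rightarrow> ('a \<Rightarrow> 'v) \<Rightarrow> ('a \<times> 'a) set" where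
  "composable A s t = {(x, y). x \<in> A \<and> y \<in> A \<and> t x = s y}"

definition composable3 :: "'a set \<Rightarrow> ('a \<Rightarrow> 'v) \<Rightarrow> ('a \<Rightarrow> 'v) \<Rightarrow> ('a \<times> 'a \<times> 'a) set" where
  "composable3 A s t = {(x, y, z). x \<in> A \<and> y \<in> A \<and> z \<in> A \<and> t x = s y \<and> t y = s z}"

definition sig12 :: "('a \<times> 'a \<Rightarrow> 'a \<times> 'a) \<Rightarrow> 'a \<times> 'a \<times> 'a \<Rightarrow> 'a \<times> 'a \<times> 'a" where
  "sig12 \<sigma> = (\<lambda>(x, y, z). (fst (\<sigma> (x, y)), snd (\<sigma> (x, y)), z))"

definition sig23 :: "('a \<times> 'a \<Rightarrow> 'a \<times> 'a) \<Rightarrow> 'a \<times> 'a \<times> 'a \<Rightarrow> 'a \<times> 'a \<times> 'a" where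
  "sig23 \<sigma> = (\<lambda>(x, y, z). (x, fst (\<sigma> (y, z)), snd (\<sigma> (y, z))))"

text \<open>Quiver-theoretic Yang--Baxter map: sigma(x,y) = (x \<rightharpoonup> y, x \<leftharpoonup> y) on
composable pairs, preserving sources/targets: s(x\<rightharpoonup>y) = s x,
t(x\<rightharpoonup>y) = s(x\<leftharpoonup>y), t(x\<leftharpoonup>y) = t y; braid relation on composable triples.\<close>

definition quiver_YB_map :: "'a set \<Rightarrow> ('a \<Rightarrow> 'v) \<Rightarrow> ('a \<Rightarrow> 'v) \<Rightarrow> ('a \<times> 'a \<Rightarrow> 'a \<times> 'a) \<Rightarrow> bool" where
  "quiver_YB_map A s t \<sigma> \<longleftrightarrow>
     (\<forall>(x, y) \<in> composable A s t.
        \<sigma> (x, y) \<in> composable A s t \<and>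
        s (fst (\<sigma> (x, y))) = s x \<and> t (snd (\<sigma> (x, y))) = t y) \<and>
     (\<forall>p \<in> composable3 A s t.
        sig12 \<sigma> (sig23 \<sigma> (sig12 \<sigma> p)) = sig23 \<sigma> (sig12 \<sigma> (sig23 \<sigma> p)))"

definition involutive_YB :: "'a set \<Rightarrow> ('a \<Rightarrow> 'v) \<Rightarrow> ('a \<Rightarrow> 'v) \<Rightarrow> ('a \<times> 'a \<Rightarrow> 'a \<times> 'a) \<Rightarrow> bool" where
  "involutive_YB A s t \<sigma> \<longleftrightarrow> (\<forall>p \<in> composable A s t. \<sigma> (\<sigma> p) = p)"

definition right_nondeg_YB :: "'a set \<Rightarrow> ('a \<Rightarrow> 'v) \<Rightarrow> ('a \<Rightarrow> 'v) \<Rightarrow> ('a \<times> 'a \<Rightarrow> 'a \<times> 'a) \<Rightarrow> bool" where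
  "right_nondeg_YB A s t \<sigma> \<longleftrightarrow>
     (\<forall>y \<in> A. bij_betw (\<lambda>x. snd (\<sigma> (x, y))) {x \<in> A. t x = s y} {w \<in> A. t w = t y})"

text \<open>Partial binary operation on the arrows A, encoded with option
(None = undefined; defined values only for arguments in A, results in A).\<close>

definition weak_coRC :: "'a set \<Rightarrow> ('a \<Rightarrow> 'v) \<Rightarrow> ('a \<Rightarrow> 'v) \<Rightarrow> ('a \<Rightarrow> 'a \<Rightarrow> 'a option) \<Rightarrow> bool" where
  "weak_coRC A s t op \<longleftrightarrow>
     (\<forall>x y. op x y \<noteq> None \<longrightarrow> x \<in> A \<and> y \<in> A \<and> the (op x y) \<in> A) \<and>
     (\<forall>x \<in> A. \<forall>y \<in> A. op x y \<noteq> None \<longrightarrow> t x = t y) \<and>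
     (\<forall>x \<in> A. \<forall>y \<in> A. op x y \<noteq> None \<longrightarrow>
        op y x \<noteq> None \<and>
        t (the (op x y)) = s x \<and> t (the (op y x)) = s y \<and>
        s (the (op x y)) = s (the (op y x))) \<and>
     (\<forall>x \<in> A. \<forall>y \<in> A. \<forall>z \<in> A.
        op x y \<noteq> None \<and> op x z \<noteq> None \<and> op (the (op x y)) (the (op x z)) \<noteq> None \<longrightarrow>
        op y z \<noteq> None \<and> op (the (op y x)) (the (op y z)) \<noteq> None \<and>
        op (the (op x y)) (the (op x z)) = op (the (op y x)) (the (op y z)))"

definition left_nondeg_coRC :: "'a set \<Rightarrow> ('a \<Rightarrow> 'v) \<Rightarrow> ('a \<Rightarrow> 'v) \<Rightarrow> ('a \<Rightarrow> 'a \<Rightarrow> 'a option) \<Rightarrow> bool" where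
  "left_nondeg_coRC A s t op \<longleftrightarrow>
     (\<forall>x \<in> A. (\<forall>y \<in> A. t y = t x \<longrightarrow> op x y \<noteq> None) \<and>
        bij_betw (\<lambda>y. the (op x y)) {y \<in> A. t y = t x} {w \<in> A. t w = s x})"

definition yb_bullet :: "'a set \<Rightarrow> ('a \<Rightarrow> 'v) \<Rightarrow> ('a \<Rightarrow> 'v) \<Rightarrow> ('a \<times> 'a \<Rightarrow> 'a \<times> 'a) \<Rightarrow> 'a \<Rightarrow> 'a \<Rightarrow> 'a option" where
  "yb_bullet A s t \<sigma> x y =
     (if x \<in> A \<and> y \<in> A \<and> t x = t y
      then Some (inv_into {z \<in> A. t z = s x} (\<lambda>z. snd (\<sigma> (z, x))) y)
      else None)"

end

theory Submission
  imports Defs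
begin

text \<open>Right non-degeneracy makes \<open>x \<bullet> y\<close> the unique arrow \<open>w\<close> with \<open>t w = s x\<close> and
\<open>\<sigma>(w, x) = (_, y)\<close>; involutivity then gives \<open>\<sigma>(x \<bullet> y, x) = (y \<bullet> x, y)\<close>.
For the cycloid identity apply the braid relation to \<open>(c, x \<bullet> y, x)\<close> with
\<open>c = (x \<bullet> y) \<bullet> (x \<bullet> z)\<close>: the second entry \<open>r\<close> of \<open>\<sigma>(c, y \<bullet> x)\<close> satisfies
\<open>\<sigma>(r, y) = (_, z)\<close>, so \<open>r = y \<bullet> z\<close> and hence \<open>c = (y \<bullet> x) \<bullet> (y \<bullet> z)\<close>.\<close>

lemma quiver_YB_mapD:
  assumes "quiver_YB_map A s t \<sigma>" "x \<in> A" "y \<in> A" "t x = s y"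
  shows "fst (\<sigma> (x, y)) \<in> A" "snd (\<sigma> (x, y)) \<in> A"
    and "t (fst (\<sigma> (x, y))) = s (snd (\<sigma> (x, y)))"
    and "s (fst (\<sigma> (x, y))) = s x" "t (snd (\<sigma> (x, y))) = t y"
proof -
  have "(x, y) \<in> composable A s t"
    using assms unfolding composable_def by simp
  then have "\<sigma> (x, y) \<in> composable A s t \<and> s (fst (\<sigma> (x, y))) = s x \<and> t (snd (\<sigma> (x, y))) = t y"
    using assms(1) unfolding quiver_YB_map_def by fast
  then show "fst (\<sigma> (x, y)) \<in> A" "snd (\<sigma> (x, y)) \<in> A"
    and "t (fst (\<sigma> (x, y))) = s (snd (\<sigma> (x, y)))"
    and "s (fst (\<sigma> (x, y))) = s x" "t (snd (\<sigma> (x, y))) = t y"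
    unfolding composable_def by (auto simp: case_prod_beta)
qed

lemma quiver_YB_map_braid:
  assumes "quiver_YB_map A s t \<sigma>" "x \<in> A" "y \<in> A" "z \<in> A" "t x = s y" "t y = s z"
  shows "sig12 \<sigma> (sig23 \<sigma> (sig12 \<sigma> (x, y, z))) = sig23 \<sigma> (sig12 \<sigma> (sig23 \<sigma> (x, y, z)))"
proof -
  have "(x, y, z) \<in> composable3 A s t"
    using assms unfolding composable3_def by simp
  then show ?thesis
    using assms(1) unfolding quiver_YB_map_def by fast
qed

lemma involutive_YBD:
  assumes "involutive_YB A s t \<sigma>" "x \<in> A" "y \<in> A" "t x = s y"
  shows "\<sigma> (\<sigma> (x, y)) = (x, y)"
  using assms unfolding involutive_YB_def composable_def by blast

lemma right_nondeg_YB_bij_betw: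
  assumes "right_nondeg_YB A s t \<sigma>" "x \<in> A"
  shows "bij_betw (\<lambda>w. snd (\<sigma> (w, x))) {w \<in> A. t w = s x} {y \<in> A. t y = t x}"
  using assms unfolding right_nondeg_YB_def by blast

lemma yb_bullet_eq_None_iff:
  "yb_bullet A s t \<sigma> x y = None \<longleftrightarrow> \<not> (x \<in> A \<and> y \<in> A \<and> t x = t y)"
  unfolding yb_bullet_def by simp

lemma yb_bullet_eq_Some_iff:
  assumes "right_nondeg_YB A s t \<sigma>" "x \<in> A"
  shows "yb_bullet A s t \<sigma> x y = Some w \<longleftrightarrow> w \<in> A \<and> t w = s x \<and> snd (\<sigma> (w, x)) = y"
proof -
  let ?f = "\<lambda>w. snd (\<sigma> (w, x))" and ?S = "{w \<in> A. t w = s x}" and ?T = "{y \<in> A. t y = t x}"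
  have bij: "bij_betw ?f ?S ?T"
    using right_nondeg_YB_bij_betw[OF assms] .
  show ?thesis
  proof
    assume "yb_bullet A s t \<sigma> x y = Some w"
    then have "y \<in> ?T" and w: "w = inv_into ?S ?f y"
      unfolding yb_bullet_def by (auto split: if_splits)
    then show "w \<in> A \<and> t w = s x \<and> snd (\<sigma> (w, x)) = y"
      using bij bij_betw_inv_into_right[OF bij] inv_into_into[of y ?f ?S]
      unfolding bij_betw_def by auto
  next
    assume w: "w \<in> A \<and> t w = s x \<and> snd (\<sigma> (w, x)) = y"
    then have "y \<in> ?T"
      using bij unfolding bij_betw_def by auto
    then show "yb_bullet A s t \<sigma> x y = Some w"
      using w bij_betw_inv_into_left[OF bij, of w] assms(2) unfolding yb_bullet_def by auto
  qed
qed

lemma yb_bullet_SomeE: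
  assumes "right_nondeg_YB A s t \<sigma>" "yb_bullet A s t \<sigma> x y = Some w"
  obtains "x \<in> A" "y \<in> A" "t x = t y" "w \<in> A" "t w = s x" "snd (\<sigma> (w, x)) = y"
proof -
  have "x \<in> A \<and> y \<in> A \<and> t x = t y"
    using assms(2) unfolding yb_bullet_def by (auto split: if_splits)
  then show thesis
    using that yb_bullet_eq_Some_iff[OF assms(1)] assms(2) by blast
qed

lemma yb_bullet_exists:
  assumes "x \<in> A" "y \<in> A" "t x = t y"
  obtains w where "yb_bullet A s t \<sigma> x y = Some w"
  using assms that unfolding yb_bullet_def by simp

lemma sigma_yb_bullet:
  assumes Q: "quiver_YB_map A s t \<sigma>" and I: "involutive_YB A s t \<sigma>" and R: "right_nondeg_YB A s t \<sigma>"
    and xy: "yb_bullet A s t \<sigma> x y = Some w" and yx: "yb_bullet A s t \<sigma> y x = Some v"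
  shows "\<sigma> (w, x) = (v, y)"
proof -
  obtain "x \<in> A" "y \<in> A" "w \<in> A" "t w = s x" and y: "snd (\<sigma> (w, x)) = y"
    using yb_bullet_SomeE[OF R xy] .
  define u where "u = fst (\<sigma> (w, x))"
  have sigma_wx: "\<sigma> (w, x) = (u, y)"
    using y unfolding u_def by (simp add: prod_eq_iff)
  have "u \<in> A" "t u = s y"
    using quiver_YB_mapD[OF Q \<open>w \<in> A\<close> \<open>x \<in> A\<close> \<open>t w = s x\<close>] y unfolding u_def by auto
  moreover have "\<sigma> (u, y) = (w, x)"
    using involutive_YBD[OF I \<open>w \<in> A\<close> \<open>x \<in> A\<close> \<open>t w = s x\<close>] sigma_wx by simp
  ultimately have "yb_bullet A s t \<sigma> y x = Some u"
    using yb_bullet_eq_Some_iff[OF R \<open>y \<in> A\<close>] by simp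
  then show ?thesis
    using sigma_wx yx by simp
qed

lemma yb_bullet_cycloid:
  assumes Q: "quiver_YB_map A s t \<sigma>" and I: "involutive_YB A s t \<sigma>" and R: "right_nondeg_YB A s t \<sigma>"
    and xy: "yb_bullet A s t \<sigma> x y = Some a" and xz: "yb_bullet A s t \<sigma> x z = Some b"
    and ab: "yb_bullet A s t \<sigma> a b = Some c"
    and yx: "yb_bullet A s t \<sigma> y x = Some a'" and yz: "yb_bullet A s t \<sigma> y z = Some b'"
  shows "yb_bullet A s t \<sigma> a' b' = Some c"
proof -
  obtain "x \<in> A" "y \<in> A" "a \<in> A" "t a = s x"
    using yb_bullet_SomeE[OF R xy] .
  obtain "z \<in> A" "b \<in> A" "t x = t z"
    using yb_bullet_SomeE[OF R xz] .
  obtain "c \<in> A" "t c = s a"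
    using yb_bullet_SomeE[OF R ab] .
  obtain "a' \<in> A" "t a' = s y" "s a = s a'"
    using yb_bullet_SomeE[OF R yx] quiver_YB_mapD(4)[OF Q \<open>a \<in> A\<close> \<open>x \<in> A\<close> \<open>t a = s x\<close>]
      sigma_yb_bullet[OF Q I R xy yx] by (metis fst_conv)
  obtain zx where zx: "yb_bullet A s t \<sigma> z x = Some zx"
    using yb_bullet_exists \<open>x \<in> A\<close> \<open>z \<in> A\<close> \<open>t x = t z\<close> by metis
  obtain ba where ba: "yb_bullet A s t \<sigma> b a = Some ba"
    using yb_bullet_exists \<open>a \<in> A\<close> \<open>b \<in> A\<close> yb_bullet_SomeE[OF R xz] \<open>t a = s x\<close> by metis
  define r where "r = snd (\<sigma> (c, a'))"
  have "r \<in> A" "t r = s y"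
    using quiver_YB_mapD[OF Q \<open>c \<in> A\<close> \<open>a' \<in> A\<close>] \<open>t c = s a\<close> \<open>s a = s a'\<close> \<open>t a' = s y\<close>
    unfolding r_def by auto
  have "sig12 \<sigma> (sig23 \<sigma> (sig12 \<sigma> (c, a, x))) = (fst (\<sigma> (ba, zx)), snd (\<sigma> (ba, zx)), z)"
    using sigma_yb_bullet[OF Q I R ab ba] sigma_yb_bullet[OF Q I R xz zx]
    unfolding sig12_def sig23_def by simp
  moreover have "sig23 \<sigma> (sig12 \<sigma> (sig23 \<sigma> (c, a, x))) = (fst (\<sigma> (c, a')), \<sigma> (r, y))"
    using sigma_yb_bullet[OF Q I R xy yx] unfolding sig12_def sig23_def r_def by simp
  ultimately have "\<sigma> (r, y) = (snd (\<sigma> (ba, zx)), z)"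
    using quiver_YB_map_braid[OF Q \<open>c \<in> A\<close> \<open>a \<in> A\<close> \<open>x \<in> A\<close> \<open>t c = s a\<close> \<open>t a = s x\<close>]
    by simp
  then have "yb_bullet A s t \<sigma> y z = Some r"
    using yb_bullet_eq_Some_iff[OF R \<open>y \<in> A\<close>] \<open>r \<in> A\<close> \<open>t r = s y\<close> by simp
  then have "r = b'"
    using yz by simp
  then show ?thesis
    using yb_bullet_eq_Some_iff[OF R \<open>a' \<in> A\<close>] \<open>c \<in> A\<close> \<open>t c = s a\<close> \<open>s a = s a'\<close>
    unfolding r_def by simp
qed

lemma weak_coRC_yb_bullet:
  assumes Q: "quiver_YB_map A s t \<sigma>" and I: "involutive_YB A s t \<sigma>" and R: "right_nondeg_YB A s t \<sigma>"
  shows "weak_coRC A s t (yb_bullet A s t \<sigma>)"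
proof -
  let ?b = "yb_bullet A s t \<sigma>"
  have dom: "x \<in> A \<and> y \<in> A \<and> t x = t y \<and> the (?b x y) \<in> A \<and> t (the (?b x y)) = s x"
    if "?b x y \<noteq> None" for x y
    using that by (auto elim: yb_bullet_SomeE[OF R])
  have swap: "?b y x \<noteq> None \<and> s (the (?b x y)) = s (the (?b y x))"
    if defined: "?b x y \<noteq> None" for x y
  proof -
    obtain w where w: "?b x y = Some w"
      using defined by blast
    obtain "x \<in> A" "y \<in> A" "t x = t y" "w \<in> A" "t w = s x"
      using yb_bullet_SomeE[OF R w] .
    obtain v where v: "?b y x = Some v"
      using yb_bullet_exists \<open>x \<in> A\<close> \<open>y \<in> A\<close> \<open>t x = t y\<close> by metis
    have "s v = s w"
      using quiver_YB_mapD(4)[OF Q \<open>w \<in> A\<close> \<open>x \<in> A\<close> \<open>t w = s x\<close>]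
        sigma_yb_bullet[OF Q I R w v] by simp
    then show ?thesis
      using w v by simp
  qed
  have cycloid: "?b y z \<noteq> None \<and> ?b (the (?b y x)) (the (?b y z)) \<noteq> None
      \<and> ?b (the (?b x y)) (the (?b x z)) = ?b (the (?b y x)) (the (?b y z))"
    if defined: "?b x y \<noteq> None" "?b x z \<noteq> None" "?b (the (?b x y)) (the (?b x z)) \<noteq> None"
    for x y z
  proof -
    obtain a b c where xy: "?b x y = Some a" and xz: "?b x z = Some b" and ab: "?b a b = Some c"
      using defined by fastforce
    obtain a' where yx: "?b y x = Some a'"
      using swap[OF defined(1)] by blast
    obtain b' where yz: "?b y z = Some b'"
      using yb_bullet_exists dom[OF defined(1)] dom[OF defined(2)] by metis
    show ?thesis
      using yb_bullet_cycloid[OF Q I R xy xz ab yx yz] xy xz ab yx yz by simp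
  qed
  show ?thesis
    unfolding weak_coRC_def using dom swap cycloid by blast
qed

lemma left_nondeg_coRC_yb_bullet:
  assumes "right_nondeg_YB A s t \<sigma>"
  shows "left_nondeg_coRC A s t (yb_bullet A s t \<sigma>)"
  unfolding left_nondeg_coRC_def
proof (rule ballI, rule conjI)
  fix x assume "x \<in> A"
  then show "\<forall>y \<in> A. t y = t x \<longrightarrow> yb_bullet A s t \<sigma> x y \<noteq> None"
    by (simp add: yb_bullet_eq_None_iff)
  let ?g = "inv_into {w \<in> A. t w = s x} (\<lambda>w. snd (\<sigma> (w, x)))"
  have bij: "bij_betw ?g {y \<in> A. t y = t x} {w \<in> A. t w = s x}"
    using bij_betw_inv_into[OF right_nondeg_YB_bij_betw[OF assms \<open>x \<in> A\<close>]] .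
  have eq: "the (yb_bullet A s t \<sigma> x y) = ?g y" if "y \<in> {y \<in> A. t y = t x}" for y
    using that \<open>x \<in> A\<close> unfolding yb_bullet_def by simp
  show "bij_betw (\<lambda>y. the (yb_bullet A s t \<sigma> x y)) {y \<in> A. t y = t x} {w \<in> A. t w = s x}"
    using bij by (simp only: bij_betw_cong[OF eq])
qed

theorem proposition5p2:
  fixes A :: "'a set" and s t :: "'a \<Rightarrow> 'v" and \<sigma> :: "'a \<times> 'a \<Rightarrow> 'a \<times> 'a"
  assumes "quiver_YB_map A s t \<sigma>"
    and "involutive_YB A s t \<sigma>"
    and "right_nondeg_YB A s t \<sigma>"
  shows "weak_coRC A s t (yb_bullet A s t \<sigma>)
       \<and> left_nondeg_coRC A s t (yb_bullet A s t \<sigma>)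
       \<and> (\<forall>x \<in> A. \<forall>y \<in> A. t x = t y \<longrightarrow> yb_bullet A s t \<sigma> x y \<noteq> None)"
  using weak_coRC_yb_bullet[OF assms] left_nondeg_coRC_yb_bullet[OF assms(3)]
  by (simp add: yb_bullet_eq_None_iff)

end
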